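(* Let $A$ be a synaptic algebra, $p,q\in P$, and let $c:=(pqp+p^{\perp}q^{\perp}p^{\perp})^{1/2}$ and $s:=(pq^{\perp}p+p^{\perp}qp^{\perp})^{1/2}$ be the cosine and sine effects of $q$ with respect to $p$. The following are mutually equivalent: (i) $pCq$; (ii) $pqp^{\perp}+p^{\perp}qp=0$; (iii) $q=c^2p+s^2p^{\perp}$; (iv) $cs=0$; (v) $c$ and $s$ are projections and $c^{\perp}=s$; (vi) $c,s\in P$, $c^{\perp}=s$, and $q=cp+c^{\perp}p^{\perp}=s^{\perp}p+sp^{\perp}=|p-s|$; (vii) there exists a projection $t\in P$ such that $tCp$ and $q=|p-t|$.
   Context: Synaptic algebra (Foulis): $R$ is a real linear associative algebra with unit $1$, and $A\subseteq R$ is a real linear subspace with $1\in A$. For $a,b\in A$ write $aCb$ iff $ab=ba$; $C(a):=\{b\in A: aCb\}$; $CC(a):=\{b\in A: bCd \text{ for all } d\in C(a)\}$. $A$ is a synaptic algebra with enveloping algebra $R$ iff: (SA1) $A$ is a partially ordered archimedean real linear space with positive cone $A^+$, $1$ is an order unit, $\|\cdot\|$ the order-unit norm; (SA2) $a\in A\Rightarrow a^2\in A^+$; (SA3) $a,b\in A^+\Rightarrow aba\in A^+$; (SA4) if $a\in A$, $b\in A^+$, $aba=0$ then $ab=ba=0$; (SA5) if $a\in A^+$ there is $b\in A^+\cap CC(a)$ with $b^2=a$; (SA6) for $a\in A$ there is $p=p^2\in A$ with $ab=0\Leftrightarrow pb=0$ for all $b\in A$; (SA7) if $1\le a$ there is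 $b\in A$ with $ab=ba=1$; (SA8) if $a,b\in A$, $a_1\le a_2\le\cdots$ are pairwise commuting elements of $C(b)$ with $\|a-a_n\|\to0$, then $a\in C(b)$. $A$ is nondegenerate. Products are computed in $R$. $P:=\{p\in A:p=p^2\}$, $p^{\perp}:=1-p$. For $0\le a$, $a^{1/2}$ is its unique positive square root in $A$; $|a|:=(a^2)^{1/2}$. *)

theory Defs
  imports Complex_Main
begin

text \<open>A synaptic algebra A with enveloping algebra R: R is the type 'a (a real
  unital associative algebra), A is a subset of R, Apos is the positive cone A^+.\<close>

definition sa_le :: "'a::real_algebra_1 set \<Rightarrow> 'a \<Rightarrow> 'a \<Rightarrow> bool" where
  "sa_le Apos x y \<longleftrightarrow> y - x \<in> Apos"

definition sa_commute :: "'a::real_algebra_1 \<Rightarrow> 'a \<Rightarrow> bool" where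
  "sa_commute a b \<longleftrightarrow> a * b = b * a"

definition sa_C :: "'a::real_algebra_1 set \<Rightarrow> 'a \<Rightarrow> 'a set" where
  "sa_C A a = {b \<in> A. sa_commute a b}"

definition sa_CC :: "'a::real_algebra_1 set \<Rightarrow> 'a \<Rightarrow> 'a set" where
  "sa_CC A a = {b \<in> A. \<forall>d \<in> sa_C A a. sa_commute b d}"

definition ou_norm :: "'a::real_algebra_1 set \<Rightarrow> 'a \<Rightarrow> real" where
  "ou_norm Apos a = Inf {l::real. 0 < l \<and> sa_le Apos (- (l *\<^sub>R 1)) a \<and> sa_le Apos a (l *\<^sub>R 1)}"

definition synaptic_algebra :: "'a::real_algebra_1 set \<Rightarrow> 'a set \<Rightarrow> bool" where
  "synaptic_algebra A Apos \<longleftrightarrow>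
     \<comment> \<open>A is a real linear subspace of R containing 1\<close>
     0 \<in> A \<and> 1 \<in> A \<and> (\<forall>a\<in>A. \<forall>b\<in>A. a + b \<in> A) \<and> (\<forall>r::real. \<forall>a\<in>A. r *\<^sub>R a \<in> A) \<and>
     \<comment> \<open>SA1: partially ordered (positive cone), archimedean, 1 order unit\<close>
     Apos \<subseteq> A \<and> 0 \<in> Apos \<and> (\<forall>a\<in>Apos. \<forall>b\<in>Apos. a + b \<in> Apos) \<and>
     (\<forall>r::real. \<forall>a\<in>Apos. 0 \<le> r \<longrightarrow> r *\<^sub>R a \<in> Apos) \<and>
     (\<forall>a\<in>Apos. - a \<in> Apos \<longrightarrow> a = 0) \<and>
     (\<forall>a\<in>A. \<forall>b\<in>A. (\<forall>n::nat. sa_le Apos (real n *\<^sub>R a) b) \<longrightarrow> sa_le Apos a 0) \<and>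
     (\<forall>a\<in>A. \<exists>l::real. 0 < l \<and> sa_le Apos (- (l *\<^sub>R 1)) a \<and> sa_le Apos a (l *\<^sub>R 1)) \<and>
     \<comment> \<open>SA2\<close>
     (\<forall>a\<in>A. a * a \<in> Apos) \<and>
     \<comment> \<open>SA3\<close>
     (\<forall>a\<in>Apos. \<forall>b\<in>Apos. a * b * a \<in> Apos) \<and>
     \<comment> \<open>SA4\<close>
     (\<forall>a\<in>A. \<forall>b\<in>Apos. a * b * a = 0 \<longrightarrow> a * b = 0 \<and> b * a = 0) \<and>
     \<comment> \<open>SA5\<close>
     (\<forall>a\<in>Apos. \<exists>b\<in>Apos \<inter> sa_CC A a. b * b = a) \<and>
     \<comment> \<open>SA6\<close>
     (\<forall>a\<in>A. \<exists>p\<in>A. p = p * p \<and> (\<forall>b\<in>A. a * b = 0 \<longleftrightarrow> p * b = 0)) \<and>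
     \<comment> \<open>SA7\<close>
     (\<forall>a\<in>A. sa_le Apos 1 a \<longrightarrow> (\<exists>b\<in>A. a * b = 1 \<and> b * a = 1)) \<and>
     \<comment> \<open>SA8\<close>
     (\<forall>a\<in>A. \<forall>b\<in>A. \<forall>an::nat \<Rightarrow> 'a.
        (\<forall>n. an n \<in> sa_C A b) \<and> (\<forall>n. sa_le Apos (an n) (an (Suc n))) \<and>
        (\<forall>m n. sa_commute (an m) (an n)) \<and>
        (\<lambda>n. ou_norm Apos (a - an n)) \<longlonglongrightarrow> 0
        \<longrightarrow> a \<in> sa_C A b) \<and>
     \<comment> \<open>nondegenerate\<close>
     (0::'a) \<noteq> 1"

definition sa_P :: "'a::real_algebra_1 set \<Rightarrow> 'a set" where
  "sa_P A = {p \<in> A. p = p * p}"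

definition sa_sqrt :: "'a::real_algebra_1 set \<Rightarrow> 'a \<Rightarrow> 'a" where
  "sa_sqrt Apos a = (THE b. b \<in> Apos \<and> b * b = a)"

definition sa_abs :: "'a::real_algebra_1 set \<Rightarrow> 'a \<Rightarrow> 'a" where
  "sa_abs Apos a = sa_sqrt Apos (a * a)"

end

theory Submission
  imports Defs
begin

text \<open>Write p' = 1 - p, q' = 1 - q and a = pqp + p'q'p', so that c^2 = a. A direct computation
  in the enveloping ring gives s^2 = 1 - a, q = a p + (1 - a) p' + T for the off-diagonal part
  T = p q p' + p' q p, and T^2 = a - a^2. Since T lies in A, axiom SA4 turns T^2 = 0 into T = 0,
  so pCq, T = 0 and a^2 = a are all equivalent. When a is idempotent, uniqueness of positive
  square roots gives c = a and s = 1 - a, from which (ii)-(vii) follow by algebra; conversely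
  each of (ii)-(vi) forces T = 0 or a^2 = a. For (vii), q = |p - t| is the square root of
  (p - t)^2, which commutes with p, so q lies in its double commutant and commutes with p.\<close>

lemma
  assumes "synaptic_algebra A Apos"
  shows sa_one_mem: "1 \<in> A"
    and sa_add_mem: "\<lbrakk>a \<in> A; b \<in> A\<rbrakk> \<Longrightarrow> a + b \<in> A"
    and sa_scaleR_mem: "a \<in> A \<Longrightarrow> r *\<^sub>R a \<in> A"
    and sa_pos_subset: "Apos \<subseteq> A"
    and sa_add_pos: "\<lbrakk>a \<in> Apos; b \<in> Apos\<rbrakk> \<Longrightarrow> a + b \<in> Apos"
    and sa_pos_antisym: "\<lbrakk>a \<in> Apos; - a \<in> Apos\<rbrakk> \<Longrightarrow> a = 0"
    and sa_square_pos: "a \<in> A \<Longrightarrow> a * a \<in> Apos"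
    and sa_sandwich_pos: "\<lbrakk>a \<in> Apos; b \<in> Apos\<rbrakk> \<Longrightarrow> a * b * a \<in> Apos"
    and sa_sandwich_eq_0: "\<lbrakk>a \<in> A; b \<in> Apos; a * b * a = 0\<rbrakk> \<Longrightarrow> a * b = 0"
    and sa_pos_root: "a \<in> Apos \<Longrightarrow> \<exists>b\<in>Apos \<inter> sa_CC A a. b * b = a"
  using assms unfolding synaptic_algebra_def by simp_all

lemma sa_diff_mem:
  assumes SA: "synaptic_algebra A Apos" and "x \<in> A" "y \<in> A"
  shows "x - y \<in> A"
  using sa_add_mem[OF SA \<open>x \<in> A\<close> sa_scaleR_mem[OF SA \<open>y \<in> A\<close>, of "-1"]] by simp

lemma sa_one_pos:
  assumes SA: "synaptic_algebra A Apos"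
  shows "1 \<in> Apos"
  using sa_square_pos[OF SA sa_one_mem[OF SA]] by simp

lemma sa_proj_pos:
  assumes SA: "synaptic_algebra A Apos" and "p \<in> sa_P A"
  shows "p \<in> Apos"
  using assms sa_square_pos[OF SA] unfolding sa_P_def by force

lemma sa_proj_complement:
  assumes SA: "synaptic_algebra A Apos" and "p \<in> sa_P A"
  shows "1 - p \<in> sa_P A"
proof -
  have "p \<in> A" "p * p = p" using assms(2) unfolding sa_P_def by auto
  then show ?thesis
    using sa_diff_mem[OF SA sa_one_mem[OF SA]] unfolding sa_P_def by (simp add: algebra_simps)
qed

lemma sa_square_eq_0:
  assumes SA: "synaptic_algebra A Apos" and "x \<in> A" "x * x = 0"
  shows "x = 0"
  using sa_sandwich_eq_0[OF SA \<open>x \<in> A\<close> sa_one_pos[OF SA]] assms(3) by simp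

lemma sa_mult_pos_commuting:
  assumes SA: "synaptic_algebra A Apos" and x: "x \<in> Apos" and y: "y \<in> Apos"
    and xy: "x * y = y * x"
  shows "x * y \<in> Apos"
proof -
  obtain e where e: "e \<in> Apos" "e \<in> sa_CC A y" "e * e = y"
    using sa_pos_root[OF SA y] by blast
  have "x \<in> sa_C A y" using x xy sa_pos_subset[OF SA] unfolding sa_C_def sa_commute_def by auto
  then have "e * x = x * e" using e(2) unfolding sa_CC_def sa_commute_def by auto
  then have "x * y = e * x * e" using e(3) by (metis mult.assoc)
  then show ?thesis using sa_sandwich_pos[OF SA e(1) x] by simp
qed

text \<open>For d = b - y one has d (b + y) = 0; positivity of d d b and d d y then forces
  d b = d y = 0, hence d d = 0.\<close>

lemma sa_commuting_pos_roots_eq: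
  assumes SA: "synaptic_algebra A Apos" and b: "b \<in> Apos" and y: "y \<in> Apos"
    and squares: "b * b = y * y" and comm: "b * y = y * b"
  shows "b = y"
proof -
  define d where "d = b - y"
  have bA: "b \<in> A" and yA: "y \<in> A" using b y sa_pos_subset[OF SA] by auto
  have dA: "d \<in> A" unfolding d_def using sa_diff_mem[OF SA bA yA] .
  have dd: "d * d \<in> Apos" using sa_square_pos[OF SA dA] .
  have db: "d * b = b * d" and dy: "d * y = y * d"
    unfolding d_def using comm by (simp_all add: algebra_simps)
  have ddb: "d * d * b \<in> Apos"
    by (rule sa_mult_pos_commuting[OF SA dd b]) (metis db mult.assoc)
  have ddy: "d * d * y \<in> Apos"
    by (rule sa_mult_pos_commuting[OF SA dd y]) (metis dy mult.assoc)
  have "d * d * b + d * d * y = d * (b * b - y * y + (b * y - y * b))"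
    unfolding d_def by (simp add: algebra_simps)
  then have sum0: "d * d * b + d * d * y = 0" using squares comm by simp
  then have "- (d * d * b) = d * d * y" by (rule add.inverse_unique)
  then have "d * d * b = 0" using sa_pos_antisym[OF SA ddb] ddy by simp
  moreover have "d * d * y = 0" using sum0 calculation by simp
  ultimately have "d * b * d = 0" "d * y * d = 0"
    by (metis db dy mult.assoc)+
  then have "d * b = 0" "d * y = 0"
    using sa_sandwich_eq_0[OF SA dA] b y by auto
  then have "d * d = 0" unfolding d_def by (simp add: right_diff_distrib)
  then show ?thesis using sa_square_eq_0[OF SA dA] unfolding d_def by simp
qed

lemma sa_sqrt_eq_CC_root:
  assumes SA: "synaptic_algebra A Apos"
    and b: "b \<in> Apos" "b \<in> sa_CC A x" "b * b = x"
  shows "sa_sqrt Apos x = b"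
  unfolding sa_sqrt_def
proof (rule the_equality)
  show "b \<in> Apos \<and> b * b = x" using b by blast
next
  fix y assume y: "y \<in> Apos \<and> y * y = x"
  then have "y \<in> sa_C A x"
    using sa_pos_subset[OF SA] unfolding sa_C_def sa_commute_def by (auto simp: mult.assoc)
  then have "b * y = y * b" using b(2) unfolding sa_CC_def sa_commute_def by auto
  then show "y = b" using sa_commuting_pos_roots_eq[OF SA b(1), of y] y b(3) by simp
qed

lemma
  assumes SA: "synaptic_algebra A Apos" and x: "x \<in> Apos"
  shows sa_sqrt_pos: "sa_sqrt Apos x \<in> Apos"
    and sa_sqrt_square: "sa_sqrt Apos x * sa_sqrt Apos x = x"
    and sa_sqrt_CC: "sa_sqrt Apos x \<in> sa_CC A x"
  using sa_pos_root[OF SA x] sa_sqrt_eq_CC_root[OF SA] by auto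

lemma sa_sqrt_eqI:
  assumes SA: "synaptic_algebra A Apos" and y: "y \<in> Apos" "y * y = x"
  shows "sa_sqrt Apos x = y"
proof -
  have x: "x \<in> Apos" using y sa_square_pos[OF SA] sa_pos_subset[OF SA] by auto
  have "y \<in> sa_C A x"
    using y sa_pos_subset[OF SA] unfolding sa_C_def sa_commute_def by (auto simp: mult.assoc)
  then have "sa_sqrt Apos x * y = y * sa_sqrt Apos x"
    using sa_sqrt_CC[OF SA x] unfolding sa_CC_def sa_commute_def by auto
  then show ?thesis
    using sa_commuting_pos_roots_eq[OF SA sa_sqrt_pos[OF SA x] y(1)] sa_sqrt_square[OF SA x] y(2)
    by simp
qed

lemma sa_sqrt_proj:
  assumes SA: "synaptic_algebra A Apos" and "p \<in> sa_P A"
  shows "sa_sqrt Apos p = p"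
  using sa_sqrt_eqI[OF SA sa_proj_pos[OF assms]] assms(2) unfolding sa_P_def by simp

lemma sa_abs_commute:
  assumes SA: "synaptic_algebra A Apos" and "x \<in> A" "d \<in> A"
    and "d * (x * x) = (x * x) * d"
  shows "sa_abs Apos x * d = d * sa_abs Apos x"
proof -
  have "d \<in> sa_C A (x * x)" using assms(3,4) unfolding sa_C_def sa_commute_def by simp
  then show ?thesis
    using sa_sqrt_CC[OF SA sa_square_pos[OF SA \<open>x \<in> A\<close>]]
    unfolding sa_abs_def sa_CC_def sa_commute_def by auto
qed

lemma idem_iff_complement_orthogonal: "x * x = x \<longleftrightarrow> x * (1 - x) = 0" for x :: "'a::ring_1"
  by (auto simp: right_diff_distrib)

lemma idem_complement: "x * x = x \<Longrightarrow> (1 - x) * (1 - x) = 1 - x" for x :: "'a::ring_1"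
  by (simp add: left_diff_distrib right_diff_distrib)

locale idempotent_pair =
  fixes p q :: "'a::ring_1"
  assumes p_idem: "p * p = p" and q_idem: "q * q = q"
begin

definition cos_sq :: 'a where "cos_sq = p * q * p + (1 - p) * (1 - q) * (1 - p)"
definition sin_sq :: 'a where "sin_sq = p * (1 - q) * p + (1 - p) * q * (1 - p)"
definition off_diag :: 'a where "off_diag = p * q * (1 - p) + (1 - p) * q * p"

lemma p_idem_left: "p * (p * x) = p * x"
  by (metis p_idem mult.assoc)

lemma q_idem_left: "q * (q * x) = q * x"
  by (metis q_idem mult.assoc)

lemmas pair_expand = p_idem q_idem p_idem_left q_idem_left cos_sq_def sin_sq_def off_diag_def

lemma sin_sq_eq: "sin_sq = 1 - cos_sq"
  by (simp add: algebra_simps pair_expand)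

lemma off_diag_square: "off_diag * off_diag = cos_sq - cos_sq * cos_sq"
  by (simp add: algebra_simps pair_expand)

lemma cos_sq_commute: "cos_sq * p = p * cos_sq"
  by (simp add: algebra_simps pair_expand)

lemma off_diag_decomposition: "cos_sq * p + (1 - cos_sq) * (1 - p) = q - off_diag"
  by (simp add: algebra_simps pair_expand)

lemma commute_iff_off_diag_eq_0: "p * q = q * p \<longleftrightarrow> off_diag = 0"
proof
  assume "off_diag = 0"
  moreover have "p * off_diag = p * q - p * q * p" "off_diag * p = q * p - p * q * p"
    by (simp_all add: algebra_simps pair_expand mult.assoc)
  ultimately show "p * q = q * p" by simp
qed (simp add: algebra_simps pair_expand)

lemma commute_imp_diff_square:
  assumes "p * q = q * p"
  shows "(p - (1 - cos_sq)) * (p - (1 - cos_sq)) = q"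
proof -
  have qp: "q * (p * x) = p * (q * x)" for x by (metis assms mult.assoc)
  have "p - (1 - cos_sq) = p * q + p * q - q"
    by (simp add: algebra_simps pair_expand assms qp)
  then show ?thesis by (simp add: algebra_simps pair_expand assms[symmetric] qp)
qed

end

locale synaptic_proj_pair =
  fixes A Apos :: "'a::real_algebra_1 set" and p q :: 'a
  assumes SA: "synaptic_algebra A Apos"
    and p_proj: "p \<in> sa_P A" and q_proj: "q \<in> sa_P A"
begin

sublocale idempotent_pair p q
  using p_proj q_proj by unfold_locales (simp_all add: sa_P_def)

abbreviation cosine :: 'a where "cosine \<equiv> sa_sqrt Apos cos_sq"
abbreviation sine :: 'a where "sine \<equiv> sa_sqrt Apos sin_sq"

lemma p_mem: "p \<in> A" and q_mem: "q \<in> A"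
  using p_proj q_proj by (simp_all add: sa_P_def)

lemma
  shows cos_sq_pos: "cos_sq \<in> Apos" and sin_sq_pos: "sin_sq \<in> Apos"
proof -
  have "p \<in> Apos" "q \<in> Apos" "1 - p \<in> Apos" "1 - q \<in> Apos"
    using sa_proj_pos[OF SA] p_proj q_proj sa_proj_complement[OF SA] by auto
  then show "cos_sq \<in> Apos" "sin_sq \<in> Apos"
    unfolding cos_sq_def sin_sq_def using sa_add_pos[OF SA] sa_sandwich_pos[OF SA] by auto
qed

lemma cosine_square: "cosine * cosine = cos_sq"
  using sa_sqrt_square[OF SA cos_sq_pos] .

lemma sine_square: "sine * sine = 1 - cos_sq"
  using sa_sqrt_square[OF SA sin_sq_pos] sin_sq_eq by simp

text \<open>A is not closed under products, so membership of the off-diagonal part is read off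
  from p q + q p = (p + q) (p + q) - p - q.\<close>

lemma off_diag_mem: "off_diag \<in> A"
proof -
  have "(p + q) * (p + q) \<in> A"
    using sa_square_pos[OF SA sa_add_mem[OF SA p_mem q_mem]] sa_pos_subset[OF SA] by blast
  then have "(p + q) * (p + q) - p - q \<in> A"
    using sa_diff_mem[OF SA sa_diff_mem[OF SA _ p_mem] q_mem] by blast
  moreover have "p * q * p \<in> A"
    using sa_sandwich_pos[OF SA sa_proj_pos[OF SA p_proj] sa_proj_pos[OF SA q_proj]]
      sa_pos_subset[OF SA] by blast
  ultimately have "(p + q) * (p + q) - p - q - p * q * p - p * q * p \<in> A"
    using sa_diff_mem[OF SA sa_diff_mem[OF SA]] by blast
  moreover have "(p + q) * (p + q) - p - q - p * q * p - p * q * p = off_diag"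
    by (simp add: algebra_simps pair_expand)
  ultimately show ?thesis by simp
qed

lemma commute_iff_cos_sq_idem: "sa_commute p q \<longleftrightarrow> cos_sq * cos_sq = cos_sq"
proof -
  have "off_diag = 0 \<longleftrightarrow> off_diag * off_diag = 0"
    using sa_square_eq_0[OF SA off_diag_mem] by auto
  also have "\<dots> \<longleftrightarrow> cos_sq * cos_sq = cos_sq"
    unfolding off_diag_square by auto
  finally show ?thesis unfolding sa_commute_def commute_iff_off_diag_eq_0 .
qed

lemma
  assumes "sa_commute p q"
  shows commute_imp_cosine_eq: "cosine = cos_sq"
    and commute_imp_sine_eq: "sine = 1 - cos_sq"
proof -
  have idem: "cos_sq * cos_sq = cos_sq" using assms commute_iff_cos_sq_idem by simp
  then show "cosine = cos_sq" using sa_sqrt_eqI[OF SA cos_sq_pos] by simp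
  have "(1 - cos_sq) * (1 - cos_sq) = 1 - cos_sq" using idem by (rule idem_complement)
  then show "sine = 1 - cos_sq" using sa_sqrt_eqI[OF SA sin_sq_pos] sin_sq_eq by simp
qed

lemma commute_iff_decomposition:
  "sa_commute p q \<longleftrightarrow> q = cosine * cosine * p + sine * sine * (1 - p)"
proof -
  have "q = cosine * cosine * p + sine * sine * (1 - p) \<longleftrightarrow> q = q - off_diag"
    unfolding cosine_square sine_square off_diag_decomposition ..
  then show ?thesis
    unfolding sa_commute_def commute_iff_off_diag_eq_0 by (simp add: eq_diff_eq)
qed

lemma commute_iff_cosine_sine_orthogonal: "sa_commute p q \<longleftrightarrow> cosine * sine = 0"
proof
  assume "sa_commute p q"
  then show "cosine * sine = 0"
    using commute_iff_cos_sq_idem commute_imp_cosine_eq commute_imp_sine_eq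
      idem_iff_complement_orthogonal[of cos_sq] by simp
next
  assume "cosine * sine = 0"
  then have "cosine * cosine * (sine * sine) = 0"
    by (metis mult.assoc mult_zero_left mult_zero_right)
  then show "sa_commute p q"
    unfolding cosine_square sine_square commute_iff_cos_sq_idem idem_iff_complement_orthogonal .
qed

lemma commute_iff_cosine_sine_complementary:
  "sa_commute p q \<longleftrightarrow> cosine \<in> sa_P A \<and> sine \<in> sa_P A \<and> 1 - cosine = sine"
proof
  assume comm: "sa_commute p q"
  have "cos_sq \<in> sa_P A"
    using comm commute_iff_cos_sq_idem cos_sq_pos sa_pos_subset[OF SA] unfolding sa_P_def by auto
  then show "cosine \<in> sa_P A \<and> sine \<in> sa_P A \<and> 1 - cosine = sine"
    using commute_imp_cosine_eq[OF comm] commute_imp_sine_eq[OF comm] sa_proj_complement[OF SA]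
    by simp
next
  assume "cosine \<in> sa_P A \<and> sine \<in> sa_P A \<and> 1 - cosine = sine"
  then have idem: "cosine * cosine = cosine" unfolding sa_P_def by auto
  have "cos_sq * cos_sq = (cosine * cosine) * (cosine * cosine)" by (simp only: cosine_square)
  also have "\<dots> = cosine * cosine" using idem by simp
  also have "\<dots> = cos_sq" by (rule cosine_square)
  finally show "sa_commute p q" unfolding commute_iff_cos_sq_idem .
qed

lemma commute_imp_proj_decompositions:
  assumes "sa_commute p q"
  shows "q = cosine * p + (1 - cosine) * (1 - p)" and "q = (1 - sine) * p + sine * (1 - p)"
  using assms off_diag_decomposition commute_iff_off_diag_eq_0 commute_imp_cosine_eq commute_imp_sine_eq
  unfolding sa_commute_def by simp_all

lemma commute_imp_abs_diff_sine:
  assumes comm: "sa_commute p q"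
  shows "q = sa_abs Apos (p - sine)"
proof -
  have "(p - sine) * (p - sine) = q"
    unfolding commute_imp_sine_eq[OF comm]
    using comm commute_imp_diff_square unfolding sa_commute_def by blast
  then show ?thesis unfolding sa_abs_def using sa_sqrt_proj[OF SA q_proj] by simp
qed

lemma commute_iff_abs_diff_commuting_proj:
  "sa_commute p q \<longleftrightarrow> (\<exists>t \<in> sa_P A. sa_commute t p \<and> q = sa_abs Apos (p - t))"
proof
  assume comm: "sa_commute p q"
  have "sa_commute sine p"
    using commute_imp_sine_eq[OF comm] cos_sq_commute unfolding sa_commute_def
    by (simp add: left_diff_distrib right_diff_distrib)
  then show "\<exists>t \<in> sa_P A. sa_commute t p \<and> q = sa_abs Apos (p - t)"
    using comm commute_iff_cosine_sine_complementary commute_imp_abs_diff_sine by blast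
next
  assume "\<exists>t \<in> sa_P A. sa_commute t p \<and> q = sa_abs Apos (p - t)"
  then obtain t where t: "t \<in> A" "t * p = p * t" "q = sa_abs Apos (p - t)"
    unfolding sa_commute_def sa_P_def by blast
  have tp: "t * (p * x) = p * (t * x)" for x by (metis t(2) mult.assoc)
  have "p * ((p - t) * (p - t)) = ((p - t) * (p - t)) * p"
    by (simp add: algebra_simps p_idem p_idem_left tp t(2))
  then show "sa_commute p q"
    using sa_abs_commute[OF SA sa_diff_mem[OF SA p_mem t(1)] p_mem] t(3)
    unfolding sa_commute_def by simp
qed

end

theorem corollary5p7:
  fixes A Apos :: "'a::real_algebra_1 set" and p q :: 'a
  assumes SA: "synaptic_algebra A Apos"
    and hp: "p \<in> sa_P A" and hq: "q \<in> sa_P A"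
  defines "c \<equiv> sa_sqrt Apos (p * q * p + (1 - p) * (1 - q) * (1 - p))"
    and "s \<equiv> sa_sqrt Apos (p * (1 - q) * p + (1 - p) * q * (1 - p))"
  shows
   "(sa_commute p q \<longleftrightarrow> p * q * (1 - p) + (1 - p) * q * p = 0) \<and>
    (sa_commute p q \<longleftrightarrow> q = c * c * p + s * s * (1 - p)) \<and>
    (sa_commute p q \<longleftrightarrow> c * s = 0) \<and>
    (sa_commute p q \<longleftrightarrow> c \<in> sa_P A \<and> s \<in> sa_P A \<and> 1 - c = s) \<and>
    (sa_commute p q \<longleftrightarrow>
        c \<in> sa_P A \<and> s \<in> sa_P A \<and> 1 - c = s \<and>
        q = c * p + (1 - c) * (1 - p) \<and>
        q = (1 - s) * p + s * (1 - p) \<and>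
        q = sa_abs Apos (p - s)) \<and>
    (sa_commute p q \<longleftrightarrow>
        (\<exists>t \<in> sa_P A. sa_commute t p \<and> q = sa_abs Apos (p - t)))"
proof -
  interpret synaptic_proj_pair A Apos p q
    using SA hp hq by unfold_locales
  have c: "c = cosine" and s: "s = sine"
    unfolding c_def s_def cos_sq_def sin_sq_def by simp_all
  show ?thesis
    using commute_iff_off_diag_eq_0 commute_iff_decomposition commute_iff_cosine_sine_orthogonal
      commute_iff_cosine_sine_complementary commute_imp_proj_decompositions
      commute_imp_abs_diff_sine commute_iff_abs_diff_commuting_proj
    unfolding c s sa_commute_def off_diag_def by blast
qed

end
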